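(* Let $P_7(\lambda;m,\varepsilon)$ be the polynomial in $\lambda$ defined in the context. There exist $\varepsilon_0>0$ and $\delta>0$, and a unique function $m^c:(0,\varepsilon_0)\to(6-\delta,6+\delta)$ with $m^c(\varepsilon)\to 6$ as $\varepsilon\to0^+$, such that for every $\varepsilon\in(0,\varepsilon_0)$ the polynomial $\widetilde P_7(\lambda;\varepsilon):=P_7(\lambda;m^c(\varepsilon),\varepsilon)$ has exactly one pair of purely imaginary roots $\pm i\omega(\varepsilon)$, with $\omega(\varepsilon)>0$. Moreover, $\omega(\varepsilon)$ converges to $\sqrt3$ as $\varepsilon$ tends to $0$.
   Context: $P_7(\lambda;m,\varepsilon)=a_0\lambda^7+a_1\lambda^6+a_2\lambda^5+a_3\lambda^4+a_4\lambda^3+a_5\lambda^2+a_6\lambda+a_7$ with $a_i=a_i(m,\varepsilon)$: $a_0=2^{11}(\varepsilon-1)^4\varepsilon^2$; $a_1=-2^{11}(\varepsilon^2-\varepsilon)^2[(5\varepsilon^2-2\varepsilon+1)m^2+2(\varepsilon+1)^2m+4]$; $a_2=(\varepsilon^2-\varepsilon)[\varepsilon(59\varepsilon^3-9\varepsilon^2+17\varepsilon-3)m^4+4\varepsilon(15\varepsilon^3+15\varepsilon^2+17\varepsilon+1)m^3+4(\varepsilon+2)(\varepsilon^3+9\varepsilon^2+5\varepsilon+1)m^2-8(2\varepsilon^3-3\varepsilon^2-4\varepsilon-3)m-8(\varepsilon-1)(\varepsilon+2)]$; $a_3=2^7[-\varepsilon^2(5\varepsilon-1)(9\varepsilon^3+\varepsilon^2+7\varepsilon-1)m^6-2\varepsilon^2(59\varepsilon^4-8\varepsilon^3+74\varepsilon^2+8\varepsilon-5)m^5-4\varepsilon(4\varepsilon^5+27\varepsilon^4+24\varepsilon^3+37\varepsilon^2+6\varepsilon-2)m^4+4\varepsilon(4\varepsilon^5+20\varepsilon^4-31\varepsilon^3-23\varepsilon^2-33\varepsilon-1)m^3+4(9\varepsilon^5+27\varepsilon^4-15\varepsilon^3-24\varepsilon^2-12\varepsilon-1)m^2+4(\varepsilon^4+17\varepsilon^3-7\varepsilon^2-9\varepsilon-2)m-4(\varepsilon-1)^2(2\varepsilon+1)]$;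 $a_4=2^3[\varepsilon^2(9\varepsilon-1)^2(\varepsilon-1)^2m^8+8\varepsilon^2(\varepsilon-1)(45\varepsilon^3+5\varepsilon^2-21\varepsilon+3)m^7+8\varepsilon(21\varepsilon^5-58\varepsilon^4-84\varepsilon^3-32\varepsilon^2+27\varepsilon-2)m^6-16\varepsilon(34\varepsilon^5+42\varepsilon^4+113\varepsilon^3+81\varepsilon^2-7\varepsilon-7)m^5-16(7\varepsilon^6+96\varepsilon^5+75\varepsilon^4+176\varepsilon^3+42\varepsilon^2-10\varepsilon-2)m^4+16\varepsilon(6\varepsilon^4-75\varepsilon^3-65\varepsilon^2-117\varepsilon-5)m^3+16(29\varepsilon^4-7\varepsilon^3-48\varepsilon^2-31\varepsilon-7)m^2+32(\varepsilon-1)(7\varepsilon^2+14\varepsilon+3)m-16(\varepsilon-1)^2]$; $a_5=2^5m[\varepsilon^2(\varepsilon-1)^2(9\varepsilon^2+\varepsilon-2)m^7+(\varepsilon^2-\varepsilon)(38\varepsilon^4+46\varepsilon^3-39\varepsilon^2+3)m^6+(36\varepsilon^6+33\varepsilon^5-123\varepsilon^4-95\varepsilon^3+54\varepsilon^2-1)m^5-(8\varepsilon^6-8\varepsilon^5+169\varepsilon^4+233\varepsilon^3+25\varepsilon^2-41\varepsilon-2)m^4-(60\varepsilon^5+110\varepsilon^4+320\varepsilon^3+129\varepsilon^2-22\varepsilon-21)m^3-4(16\varepsilon^4+37\varepsilon^3+41\varepsilon^2+7\varepsilon-5)m^2+2(4\varepsilon^3-37\varepsilon^2-10\varepsilon-5)m+4(5\varepsilon^2-2\varepsilon-3)]$;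 $a_6=2^3m[2\varepsilon^2(\varepsilon-1)^2(\varepsilon+1)(2\varepsilon-1)m^7+(\varepsilon^2-\varepsilon)(16\varepsilon^4+58\varepsilon^3-19\varepsilon^2-10\varepsilon+3)m^6+(16\varepsilon^6+72\varepsilon^5-39\varepsilon^4-171\varepsilon^3+42\varepsilon^2+17\varepsilon-1)m^5+2(20\varepsilon^5-12\varepsilon^4-113\varepsilon^3-69\varepsilon^2+41\varepsilon+5)m^4-(2\varepsilon+1)(18\varepsilon^3+81\varepsilon^2+80\varepsilon-51)m^3-4(28\varepsilon^3+31\varepsilon^2+20\varepsilon-15)m^2-4(11\varepsilon-3)(\varepsilon+1)m-8(1-\varepsilon)]$; $a_7=2^4(m^2+m^3)[\varepsilon^2(\varepsilon^2-1)(2\varepsilon-1)m^4+\varepsilon(2\varepsilon-1)(3\varepsilon^2-3\varepsilon-2)m^3+(2\varepsilon^4-13\varepsilon^2+4\varepsilon+1)m^2-3(2\varepsilon-1)(\varepsilon+1)m+2(1-2\varepsilon)]$. *)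

theory Defs
  imports "HOL-Analysis.Analysis" "HOL-Computational_Algebra.Polynomial"
begin

definition a0 :: "real \<Rightarrow> real \<Rightarrow> real" where
  "a0 m e = 2^11 * (e - 1)^4 * e^2"

definition a1 :: "real \<Rightarrow> real \<Rightarrow> real" where
  "a1 m e = - (2^11) * (e^2 - e)^2 * ((5*e^2 - 2*e + 1)*m^2 + 2*(e+1)^2*m + 4)"

definition a2 :: "real \<Rightarrow> real \<Rightarrow> real" where
  "a2 m e = (e^2 - e) * (e*(59*e^3 - 9*e^2 + 17*e - 3)*m^4
     + 4*e*(15*e^3 + 15*e^2 + 17*e + 1)*m^3
     + 4*(e+2)*(e^3 + 9*e^2 + 5*e + 1)*m^2
     - 8*(2*e^3 - 3*e^2 - 4*e - 3)*m
     - 8*(e - 1)*(e + 2))"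

definition a3 :: "real \<Rightarrow> real \<Rightarrow> real" where
  "a3 m e = 2^7 * (- (e^2)*(5*e - 1)*(9*e^3 + e^2 + 7*e - 1)*m^6
     - 2*e^2*(59*e^4 - 8*e^3 + 74*e^2 + 8*e - 5)*m^5
     - 4*e*(4*e^5 + 27*e^4 + 24*e^3 + 37*e^2 + 6*e - 2)*m^4
     + 4*e*(4*e^5 + 20*e^4 - 31*e^3 - 23*e^2 - 33*e - 1)*m^3
     + 4*(9*e^5 + 27*e^4 - 15*e^3 - 24*e^2 - 12*e - 1)*m^2
     + 4*(e^4 + 17*e^3 - 7*e^2 - 9*e - 2)*m
     - 4*(e - 1)^2*(2*e + 1))"

definition a4 :: "real \<Rightarrow> real \<Rightarrow> real" where
  "a4 m e = 2^3 * (e^2*(9*e - 1)^2*(e - 1)^2*m^8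
     + 8*e^2*(e - 1)*(45*e^3 + 5*e^2 - 21*e + 3)*m^7
     + 8*e*(21*e^5 - 58*e^4 - 84*e^3 - 32*e^2 + 27*e - 2)*m^6
     - 16*e*(34*e^5 + 42*e^4 + 113*e^3 + 81*e^2 - 7*e - 7)*m^5
     - 16*(7*e^6 + 96*e^5 + 75*e^4 + 176*e^3 + 42*e^2 - 10*e - 2)*m^4
     + 16*e*(6*e^4 - 75*e^3 - 65*e^2 - 117*e - 5)*m^3
     + 16*(29*e^4 - 7*e^3 - 48*e^2 - 31*e - 7)*m^2
     + 32*(e - 1)*(7*e^2 + 14*e + 3)*m
     - 16*(e - 1)^2)"

definition a5 :: "real \<Rightarrow> real \<Rightarrow> real" where
  "a5 m e = 2^5 * m * (e^2*(e - 1)^2*(9*e^2 + e - 2)*m^7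
     + (e^2 - e)*(38*e^4 + 46*e^3 - 39*e^2 + 3)*m^6
     + (36*e^6 + 33*e^5 - 123*e^4 - 95*e^3 + 54*e^2 - 1)*m^5
     - (8*e^6 - 8*e^5 + 169*e^4 + 233*e^3 + 25*e^2 - 41*e - 2)*m^4
     - (60*e^5 + 110*e^4 + 320*e^3 + 129*e^2 - 22*e - 21)*m^3
     - 4*(16*e^4 + 37*e^3 + 41*e^2 + 7*e - 5)*m^2
     + 2*(4*e^3 - 37*e^2 - 10*e - 5)*m
     + 4*(5*e^2 - 2*e - 3))"

definition a6 :: "real \<Rightarrow> real \<Rightarrow> real" where
  "a6 m e = 2^3 * m * (2*e^2*(e - 1)^2*(e + 1)*(2*e - 1)*m^7
     + (e^2 - e)*(16*e^4 + 58*e^3 - 19*e^2 - 10*e + 3)*m^6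
     + (16*e^6 + 72*e^5 - 39*e^4 - 171*e^3 + 42*e^2 + 17*e - 1)*m^5
     + 2*(20*e^5 - 12*e^4 - 113*e^3 - 69*e^2 + 41*e + 5)*m^4
     - (2*e + 1)*(18*e^3 + 81*e^2 + 80*e - 51)*m^3
     - 4*(28*e^3 + 31*e^2 + 20*e - 15)*m^2
     - 4*(11*e - 3)*(e + 1)*m
     - 8*(1 - e))"

definition a7 :: "real \<Rightarrow> real \<Rightarrow> real" where
  "a7 m e = 2^4 * (m^2 + m^3) * (e^2*(e^2 - 1)*(2*e - 1)*m^4
     + e*(2*e - 1)*(3*e^2 - 3*e - 2)*m^3
     + (2*e^4 - 13*e^2 + 4*e + 1)*m^2
     - 3*(2*e - 1)*(e + 1)*m
     + 2*(1 - 2*e))"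

definition P7 :: "real \<Rightarrow> real \<Rightarrow> complex poly" where
  "P7 m e = map_poly complex_of_real
     [: a7 m e, a6 m e, a5 m e, a4 m e, a3 m e, a2 m e, a1 m e, a0 m e :]"

definition unique_imag_pair :: "complex poly \<Rightarrow> real \<Rightarrow> bool" where
  "unique_imag_pair p w \<longleftrightarrow> w > 0 \<and>
     {z. poly p z = 0 \<and> Re z = 0 \<and> Im z \<noteq> 0} = {\<i> * of_real w, - \<i> * of_real w}"

end

theory Submission
  imports Defs
begin

text \<open>
  For real y, P7(i y) = R(y^2) + i y I(y^2) with R = P7_re and I = P7_im real polynomials in
  (m, e, s); so the purely imaginary roots i y, y \<noteq> 0, are given by the positive common zeros
  s = y^2 of R and I. At (m, e, s) = (6, 0, 3) both vanish, and near that point R is increasing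
  in m and decreasing in s while I is decreasing in both; for 0 \<le> e \<le> 1 the signs of a0, a2,
  a4 even make I decreasing on all of s \<ge> 0. So for fixed small e > 0 and m near 6, I(m, -) has
  exactly one positive zero s = zero_curve m, which decreases in m, and m \<mapsto> R(m, zero_curve m)
  is strictly increasing. It changes sign on [6 - \<delta>, 6 + \<delta>]; its unique zero is m^c(e), and
  \<omega>(e) = sqrt (zero_curve (m^c(e))). The same sign argument on shrinking windows around
  (6, 3) gives m^c(e) \<rightarrow> 6 and \<omega>(e) \<rightarrow> sqrt 3.
\<close>

section \<open>Common zeros of two functions with a monotone sign pattern\<close>

locale monotone_crossing =
  fixes R I :: "real \<Rightarrow> real \<Rightarrow> real" and a b c d :: real
  assumes c_nonneg: "0 \<le> c" and c_le_d: "c \<le> d"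
    and I_strict_antimono_s: "\<lbrakk>m \<in> {a..b}; 0 \<le> s; s < s'\<rbrakk> \<Longrightarrow> I m s' < I m s"
    and I_at_c_pos: "m \<in> {a..b} \<Longrightarrow> 0 < I m c"
    and I_at_d_neg: "m \<in> {a..b} \<Longrightarrow> I m d < 0"
    and I_strict_antimono_m:
      "\<lbrakk>m \<in> {a..b}; m' \<in> {a..b}; m < m'; s \<in> {c..d}\<rbrakk> \<Longrightarrow> I m' s < I m s"
    and R_strict_mono_m:
      "\<lbrakk>m \<in> {a..b}; m' \<in> {a..b}; m < m'; s \<in> {c..d}\<rbrakk> \<Longrightarrow> R m s < R m' s"
    and R_strict_antimono_s:
      "\<lbrakk>m \<in> {a..b}; s \<in> {c..d}; s' \<in> {c..d}; s < s'\<rbrakk> \<Longrightarrow> R m s' < R m s"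
    and I_continuous: "continuous_on ({a..b} \<times> {c..d}) (\<lambda>x. I (fst x) (snd x))"
    and R_continuous: "continuous_on ({a..b} \<times> {c..d}) (\<lambda>x. R (fst x) (snd x))"
begin

lemma continuous_on_I_m:
  assumes "s \<in> {c..d}"
  shows "continuous_on {a..b} (\<lambda>m. I m s)"
proof -
  have "continuous_on {a..b} (\<lambda>m. (m, s))"
    by (intro continuous_intros)
  moreover have "(\<lambda>m. (m, s)) ` {a..b} \<subseteq> {a..b} \<times> {c..d}"
    using assms by auto
  ultimately show ?thesis
    using continuous_on_compose2[OF I_continuous] by fastforce
qed

lemma continuous_on_I_s:
  assumes "m \<in> {a..b}"
  shows "continuous_on {c..d} (I m)"
proof -
  have "continuous_on {c..d} (\<lambda>s. (m, s))"
    by (intro continuous_intros)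
  moreover have "(\<lambda>s. (m, s)) ` {c..d} \<subseteq> {a..b} \<times> {c..d}"
    using assms by auto
  ultimately show ?thesis
    using continuous_on_compose2[OF I_continuous] by fastforce
qed

lemma I_pos_iff_less_zero:
  assumes "m \<in> {a..b}" "0 \<le> s" "0 \<le> t" "I m t = 0"
  shows "0 < I m s \<longleftrightarrow> s < t"
proof
  assume "0 < I m s"
  then show "s < t"
    using I_strict_antimono_s[OF assms(1), of t s] assms by (cases s t rule: linorder_cases) auto
qed (use I_strict_antimono_s[OF assms(1), of s t] assms in auto)

lemma ex1_positive_zero:
  assumes m: "m \<in> {a..b}"
  shows "\<exists>!s. 0 < s \<and> I m s = 0"
proof -
  obtain s where "c \<le> s" "s \<le> d" "I m s = 0"
    using IVT2'[of "I m" d 0 c] I_at_c_pos[OF m] I_at_d_neg[OF m] continuous_on_I_s[OF m] c_le_d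
    by auto
  moreover have "s \<noteq> c"
    using I_at_c_pos[OF m] \<open>I m s = 0\<close> by auto
  moreover have "s = t" if "0 < s" "I m s = 0" "0 < t" "I m t = 0" for s t
    using I_pos_iff_less_zero[OF m, of s t] I_pos_iff_less_zero[OF m, of t s] that by auto
  ultimately show ?thesis
    using c_nonneg by (intro ex1I[of _ s]) auto
qed

definition zero_curve :: "real \<Rightarrow> real" where
  "zero_curve m = (THE s. 0 < s \<and> I m s = 0)"

lemma zero_curve_eq_iff:
  assumes "m \<in> {a..b}" "0 < s"
  shows "I m s = 0 \<longleftrightarrow> s = zero_curve m"
  using theI'[OF ex1_positive_zero[OF assms(1)]] the1_equality[OF ex1_positive_zero[OF assms(1)]]
    assms(2)
  unfolding zero_curve_def by blast

lemma
  assumes "m \<in> {a..b}"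
  shows zero_curve_pos: "0 < zero_curve m" and I_zero_curve: "I m (zero_curve m) = 0"
  using theI'[OF ex1_positive_zero[OF assms]] unfolding zero_curve_def by auto

lemma less_zero_curve_iff:
  assumes "m \<in> {a..b}" "0 \<le> s"
  shows "s < zero_curve m \<longleftrightarrow> 0 < I m s"
  using I_pos_iff_less_zero[OF assms less_imp_le[OF zero_curve_pos] I_zero_curve] assms(1)
  by simp

lemma zero_curve_less_iff:
  assumes "m \<in> {a..b}" "0 \<le> s"
  shows "zero_curve m < s \<longleftrightarrow> I m s < 0"
proof
  assume "zero_curve m < s"
  then show "I m s < 0"
    using I_strict_antimono_s[OF assms(1) less_imp_le[OF zero_curve_pos]] assms(1) I_zero_curve
    by fastforce
next
  assume "I m s < 0"
  then show "zero_curve m < s"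
    using less_zero_curve_iff[OF assms] I_zero_curve[OF assms(1)]
    by (cases "s = zero_curve m") auto
qed

lemma zero_curve_bounds: "m \<in> {a..b} \<Longrightarrow> zero_curve m \<in> {c<..<d}"
  using less_zero_curve_iff[of m c] zero_curve_less_iff[of m d] I_at_c_pos I_at_d_neg
    c_nonneg c_le_d
  by auto

lemma zero_curve_strict_antimono:
  assumes "m \<in> {a..b}" "m' \<in> {a..b}" "m < m'"
  shows "zero_curve m' < zero_curve m"
proof -
  have "I m' (zero_curve m) < I m (zero_curve m)"
    using I_strict_antimono_m[OF assms] zero_curve_bounds[OF assms(1)] by simp
  then show ?thesis
    using zero_curve_less_iff[OF assms(2)] zero_curve_pos[OF assms(1)] I_zero_curve[OF assms(1)]
    by simp
qed

lemma tendsto_I_m: "m0 \<in> {a..b} \<Longrightarrow> u \<in> {c..d} \<Longrightarrow> ((\<lambda>m. I m u) \<longlongrightarrow> I m0 u) (at m0 within {a..b})"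
  using continuous_on_I_m unfolding continuous_on_def by blast

lemma eventually_less_zero_curve:
  assumes m0: "m0 \<in> {a..b}" and "t < zero_curve m0"
  shows "\<forall>\<^sub>F m in at m0 within {a..b}. t < zero_curve m"
proof -
  define u where "u = max t c"
  have u: "u \<in> {c..d}" "0 \<le> u" "t \<le> u" "u < zero_curve m0"
    using assms zero_curve_bounds[OF m0] c_nonneg by (auto simp: u_def)
  then have "0 < I m0 u"
    using less_zero_curve_iff[OF m0] by simp
  with tendsto_I_m[OF m0 u(1)] have "\<forall>\<^sub>F m in at m0 within {a..b}. 0 < I m u"
    by (rule order_tendstoD)
  moreover have "\<forall>\<^sub>F m in at m0 within {a..b}. m \<in> {a..b}"
    by (simp add: eventually_at_filter)
  ultimately show ?thesis
    by eventually_elim (use less_zero_curve_iff u in fastforce)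
qed

lemma eventually_zero_curve_less:
  assumes m0: "m0 \<in> {a..b}" and "zero_curve m0 < t"
  shows "\<forall>\<^sub>F m in at m0 within {a..b}. zero_curve m < t"
proof -
  define u where "u = min t d"
  have u: "u \<in> {c..d}" "0 \<le> u" "u \<le> t" "zero_curve m0 < u"
    using assms zero_curve_bounds[OF m0] c_nonneg by (auto simp: u_def)
  then have "I m0 u < 0"
    using zero_curve_less_iff[OF m0] by simp
  with tendsto_I_m[OF m0 u(1)] have "\<forall>\<^sub>F m in at m0 within {a..b}. I m u < 0"
    by (rule order_tendstoD)
  moreover have "\<forall>\<^sub>F m in at m0 within {a..b}. m \<in> {a..b}"
    by (simp add: eventually_at_filter)
  ultimately show ?thesis
    by eventually_elim (use zero_curve_less_iff u in fastforce)
qed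

lemma continuous_on_zero_curve: "continuous_on {a..b} zero_curve"
  unfolding continuous_on_def
  by (intro ballI order_tendstoI eventually_less_zero_curve eventually_zero_curve_less)

definition R_on_curve :: "real \<Rightarrow> real" where
  "R_on_curve m = R m (zero_curve m)"

lemma R_on_curve_strict_mono: "strict_mono_on {a..b} R_on_curve"
proof (rule strict_mono_onI)
  fix m m' assume m: "m \<in> {a..b}" "m' \<in> {a..b}" "m < m'"
  have "R m (zero_curve m) < R m' (zero_curve m)"
    using R_strict_mono_m[OF m] zero_curve_bounds[OF m(1)] by simp
  also have "\<dots> < R m' (zero_curve m')"
    using R_strict_antimono_s[OF m(2) _ _ zero_curve_strict_antimono[OF m]]
      zero_curve_bounds[OF m(1)] zero_curve_bounds[OF m(2)]
    by force
  finally show "R_on_curve m < R_on_curve m'"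
    unfolding R_on_curve_def .
qed

lemma continuous_on_R_on_curve: "continuous_on {a..b} R_on_curve"
proof -
  have "continuous_on {a..b} (\<lambda>m. (m, zero_curve m))"
    by (intro continuous_intros continuous_on_zero_curve)
  moreover have "(\<lambda>m. (m, zero_curve m)) ` {a..b} \<subseteq> {a..b} \<times> {c..d}"
    using zero_curve_bounds by fastforce
  ultimately show ?thesis
    unfolding R_on_curve_def using continuous_on_compose2[OF R_continuous] by fastforce
qed

lemma R_on_curve_neg:
  assumes "m \<in> {a..b}" "s \<in> {c..d}" "0 < I m s" "R m s \<le> 0"
  shows "R_on_curve m < 0"
proof -
  have "s < zero_curve m"
    using less_zero_curve_iff[OF assms(1)] assms(2,3) c_nonneg by simp
  then show ?thesis
    using R_strict_antimono_s[OF assms(1,2) _ \<open>s < zero_curve m\<close>] zero_curve_bounds[OF assms(1)]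
      assms(4)
    unfolding R_on_curve_def by force
qed

lemma R_on_curve_pos:
  assumes "m \<in> {a..b}" "s \<in> {c..d}" "I m s < 0" "0 \<le> R m s"
  shows "0 < R_on_curve m"
proof -
  have "zero_curve m < s"
    using zero_curve_less_iff[OF assms(1)] assms(2,3) c_nonneg by simp
  then show ?thesis
    using R_strict_antimono_s[OF assms(1) _ assms(2) \<open>zero_curve m < s\<close>]
      zero_curve_bounds[OF assms(1)] assms(4)
    unfolding R_on_curve_def by force
qed

lemma common_zero_iff:
  assumes "m \<in> {a..b}" "0 < s"
  shows "I m s = 0 \<and> R m s = 0 \<longleftrightarrow> s = zero_curve m \<and> R_on_curve m = 0"
  using zero_curve_eq_iff[OF assms] unfolding R_on_curve_def by auto

lemma ex_R_on_curve_zero: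
  assumes "a \<le> b" "R_on_curve a < 0" "0 < R_on_curve b"
  shows "\<exists>m \<in> {a<..<b}. R_on_curve m = 0"
proof -
  obtain m where "a \<le> m" "m \<le> b" "R_on_curve m = 0"
    using IVT'[of R_on_curve a 0 b] continuous_on_R_on_curve assms by auto
  moreover have "m \<noteq> a" "m \<noteq> b"
    using assms \<open>R_on_curve m = 0\<close> by auto
  ultimately show ?thesis
    by auto
qed

end

section \<open>P7 on the imaginary axis\<close>

definition P7_re :: "real \<Rightarrow> real \<Rightarrow> real \<Rightarrow> real" where
  "P7_re m e s = a7 m e - a5 m e * s + a3 m e * s^2 - a1 m e * s^3"

definition P7_im :: "real \<Rightarrow> real \<Rightarrow> real \<Rightarrow> real" where
  "P7_im m e s = a6 m e - a4 m e * s + a2 m e * s^2 - a0 m e * s^3"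

lemma poly_P7_imaginary:
  "poly (P7 m e) (\<i> * of_real y) = of_real (P7_re m e (y^2)) + \<i> * of_real (y * P7_im m e (y^2))"
  unfolding P7_def P7_re_def P7_im_def
  by (simp add: map_poly_pCons complex_eq_iff power2_eq_square power3_eq_cube algebra_simps)

lemma unique_imag_pair_unique:
  assumes "unique_imag_pair p w" "unique_imag_pair p w'"
  shows "w = w'"
proof -
  have "\<i> * of_real w \<in> {\<i> * of_real w', - \<i> * of_real w'}"
    using assms unfolding unique_imag_pair_def by blast
  then show ?thesis
    using assms unfolding unique_imag_pair_def by (auto simp: complex_eq_iff)
qed

lemma unique_imag_pair_P7_iff:
  assumes unique: "\<And>s s'. \<lbrakk>0 < s; 0 < s'; P7_im m e s = 0; P7_im m e s' = 0\<rbrakk> \<Longrightarrow> s = s'"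
  shows "unique_imag_pair (P7 m e) w \<longleftrightarrow> 0 < w \<and> P7_re m e (w^2) = 0 \<and> P7_im m e (w^2) = 0"
proof -
  have zero_iff: "poly (P7 m e) (\<i> * of_real y) = 0 \<longleftrightarrow>
      P7_re m e (y^2) = 0 \<and> (y = 0 \<or> P7_im m e (y^2) = 0)" for y
    by (simp add: poly_P7_imaginary complex_eq_iff)
  show ?thesis
  proof
    assume "unique_imag_pair (P7 m e) w"
    then have "0 < w" "poly (P7 m e) (\<i> * of_real w) = 0"
      unfolding unique_imag_pair_def by (auto simp: set_eq_iff)
    then show "0 < w \<and> P7_re m e (w^2) = 0 \<and> P7_im m e (w^2) = 0"
      using zero_iff[of w] by simp
  next
    assume w: "0 < w \<and> P7_re m e (w^2) = 0 \<and> P7_im m e (w^2) = 0"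
    have zero_iff_w: "poly (P7 m e) (\<i> * of_real y) = 0 \<longleftrightarrow> y = w \<or> y = -w" if "y \<noteq> 0" for y
      using zero_iff[of y] unique[of "y^2" "w^2"] w that by (auto simp: power2_eq_iff)
    have "z \<in> {z. poly (P7 m e) z = 0 \<and> Re z = 0 \<and> Im z \<noteq> 0} \<longleftrightarrow>
        z = \<i> * of_real w \<or> z = - \<i> * of_real w" for z
    proof (cases "Re z = 0")
      case True
      define y where "y = Im z"
      have z: "z = \<i> * of_real y"
        using True by (simp add: y_def complex_eq_iff)
      have "\<i> * of_real y = - (\<i> * of_real w) \<longleftrightarrow> y = -w"
        by (simp add: complex_eq_iff)
      then show ?thesis
        using zero_iff_w[of y] w by (cases "y = 0") (auto simp: z)
    qed auto
    then show "unique_imag_pair (P7 m e) w"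
      unfolding unique_imag_pair_def using w by blast
  qed
qed

lemma tendsto_P7_re:
  "(f \<longlongrightarrow> m) F \<Longrightarrow> (g \<longlongrightarrow> e) F \<Longrightarrow> ((\<lambda>x. P7_re (f x) (g x) s) \<longlongrightarrow> P7_re m e s) F"
  unfolding P7_re_def a1_def a3_def a5_def a7_def by (intro tendsto_intros)

lemma tendsto_P7_im:
  "(f \<longlongrightarrow> m) F \<Longrightarrow> (g \<longlongrightarrow> e) F \<Longrightarrow> ((\<lambda>x. P7_im (f x) (g x) s) \<longlongrightarrow> P7_im m e s) F"
  unfolding P7_im_def a0_def a2_def a4_def a6_def by (intro tendsto_intros)

section \<open>Local sign pattern at (m, e, s) = (6, 0, 3)\<close>

definition a1_dm :: "real \<Rightarrow> real \<Rightarrow> real" where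
  "a1_dm m e = (- 20480*e^6 + 49152*e^5 - 40960*e^4 + 16384*e^3 - 4096*e^2)*m
     + (- 4096*e^6 + 8192*e^4 - 4096*e^2)"

definition a2_dm :: "real \<Rightarrow> real \<Rightarrow> real" where
  "a2_dm m e = (236*e^6 - 272*e^5 + 104*e^4 - 80*e^3 + 12*e^2)*m^3
     + (180*e^6 + 24*e^4 - 192*e^3 - 12*e^2)*m^2
     + (8*e^6 + 80*e^5 + 96*e^4 - 96*e^3 - 72*e^2 - 16*e)*m
     + (- 16*e^5 + 40*e^4 + 8*e^3 - 8*e^2 - 24*e)"

definition a3_dm :: "real \<Rightarrow> real \<Rightarrow> real" where
  "a3_dm m e = (- 34560*e^6 + 3072*e^5 - 26112*e^4 + 9216*e^3 - 768*e^2)*m^5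
     + (- 75520*e^6 + 10240*e^5 - 94720*e^4 - 10240*e^3 + 6400*e^2)*m^4
     + (- 8192*e^6 - 55296*e^5 - 49152*e^4 - 75776*e^3 - 12288*e^2 + 4096*e)*m^3
     + (6144*e^6 + 30720*e^5 - 47616*e^4 - 35328*e^3 - 50688*e^2 - 1536*e)*m^2
     + (9216*e^5 + 27648*e^4 - 15360*e^3 - 24576*e^2 - 12288*e - 1024)*m
     + (512*e^4 + 8704*e^3 - 3584*e^2 - 4608*e - 1024)"

definition a4_dm :: "real \<Rightarrow> real \<Rightarrow> real" where
  "a4_dm m e = (5184*e^6 - 11520*e^5 + 7552*e^4 - 1280*e^3 + 64*e^2)*m^7
     + (20160*e^6 - 17920*e^5 - 11648*e^4 + 10752*e^3 - 1344*e^2)*m^6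
     + (8064*e^6 - 22272*e^5 - 32256*e^4 - 12288*e^3 + 10368*e^2 - 768*e)*m^5
     + (- 21760*e^6 - 26880*e^5 - 72320*e^4 - 51840*e^3 + 4480*e^2 + 4480*e)*m^4
     + (- 3584*e^6 - 49152*e^5 - 38400*e^4 - 90112*e^3 - 21504*e^2 + 5120*e + 1024)*m^3
     + (2304*e^5 - 28800*e^4 - 24960*e^3 - 44928*e^2 - 1920*e)*m^2
     + (7424*e^4 - 1792*e^3 - 12288*e^2 - 7936*e - 1792)*m
     + (1792*e^3 + 1792*e^2 - 2816*e - 768)"

definition a5_dm :: "real \<Rightarrow> real \<Rightarrow> real" where
  "a5_dm m e = (2304*e^6 - 4352*e^5 + 1280*e^4 + 1280*e^3 - 512*e^2)*m^7
     + (8512*e^6 + 1792*e^5 - 19040*e^4 + 8736*e^3 + 672*e^2 - 672*e)*m^6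
     + (6912*e^6 + 6336*e^5 - 23616*e^4 - 18240*e^3 + 10368*e^2 - 192)*m^5
     + (- 1280*e^6 + 1280*e^5 - 27040*e^4 - 37280*e^3 - 4000*e^2 + 6560*e + 320)*m^4
     + (- 7680*e^5 - 14080*e^4 - 40960*e^3 - 16512*e^2 + 2816*e + 2688)*m^3
     + (- 6144*e^4 - 14208*e^3 - 15744*e^2 - 2688*e + 1920)*m^2
     + (512*e^3 - 4736*e^2 - 1280*e - 640)*m
     + (640*e^2 - 256*e - 384)"

definition a6_dm :: "real \<Rightarrow> real \<Rightarrow> real" where
  "a6_dm m e = (256*e^6 - 384*e^5 - 128*e^4 + 384*e^3 - 128*e^2)*m^7
     + (896*e^6 + 2352*e^5 - 4312*e^4 + 504*e^3 + 728*e^2 - 168*e)*m^6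
     + (768*e^6 + 3456*e^5 - 1872*e^4 - 8208*e^3 + 2016*e^2 + 816*e - 48)*m^5
     + (1600*e^5 - 960*e^4 - 9040*e^3 - 5520*e^2 + 3280*e + 400)*m^4
     + (- 1152*e^4 - 5760*e^3 - 7712*e^2 + 704*e + 1632)*m^3
     + (- 2688*e^3 - 2976*e^2 - 1920*e + 1440)*m^2
     + (- 704*e^2 - 512*e + 192)*m
     + (64*e - 64)"

definition a7_dm :: "real \<Rightarrow> real \<Rightarrow> real" where
  "a7_dm m e = (224*e^5 - 112*e^4 - 224*e^3 + 112*e^2)*m^6
     + (192*e^5 + 480*e^4 - 1056*e^3 + 192*e)*m^5
     + (640*e^4 - 720*e^3 - 1120*e^2 + 480*e + 80)*m^4
     + (128*e^4 - 1216*e^2 + 64*e + 256)*m^3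
     + (- 288*e^2 - 336*e + 240)*m^2
     + (- 128*e + 64)*m"

lemma has_real_derivative_a_m:
  "((\<lambda>m. a1 m e) has_real_derivative a1_dm m e) (at m)"
  "((\<lambda>m. a2 m e) has_real_derivative a2_dm m e) (at m)"
  "((\<lambda>m. a3 m e) has_real_derivative a3_dm m e) (at m)"
  "((\<lambda>m. a4 m e) has_real_derivative a4_dm m e) (at m)"
  "((\<lambda>m. a5 m e) has_real_derivative a5_dm m e) (at m)"
  "((\<lambda>m. a6 m e) has_real_derivative a6_dm m e) (at m)"
  "((\<lambda>m. a7 m e) has_real_derivative a7_dm m e) (at m)"
  unfolding a1_def a2_def a3_def a4_def a5_def a6_def a7_def
    a1_dm_def a2_dm_def a3_dm_def a4_dm_def a5_dm_def a6_dm_def a7_dm_def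
  by ((rule derivative_eq_intros refl)+, (simp; algebra))+

definition P7_re_dm :: "real \<Rightarrow> real \<Rightarrow> real \<Rightarrow> real" where
  "P7_re_dm m e s = a7_dm m e - a5_dm m e * s + a3_dm m e * s^2 - a1_dm m e * s^3"

definition P7_im_dm :: "real \<Rightarrow> real \<Rightarrow> real \<Rightarrow> real" where
  "P7_im_dm m e s = a6_dm m e - a4_dm m e * s + a2_dm m e * s^2"

definition P7_re_ds :: "real \<Rightarrow> real \<Rightarrow> real \<Rightarrow> real" where
  "P7_re_ds m e s = - a5 m e + 2 * a3 m e * s - 3 * a1 m e * s^2"

lemma has_real_derivative_P7_re_m:
  "((\<lambda>m. P7_re m e s) has_real_derivative P7_re_dm m e s) (at m)"
  unfolding P7_re_def P7_re_dm_def
  by (rule derivative_eq_intros has_real_derivative_a_m refl)+ simp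

lemma has_real_derivative_P7_im_m:
  "((\<lambda>m. P7_im m e s) has_real_derivative P7_im_dm m e s) (at m)"
  unfolding P7_im_def P7_im_dm_def a0_def
  by (rule derivative_eq_intros has_real_derivative_a_m refl)+ simp

lemma has_real_derivative_P7_re_s: "(P7_re m e has_real_derivative P7_re_ds m e s) (at s)"
  unfolding P7_re_def[abs_def] P7_re_ds_def
  by (rule derivative_eq_intros refl)+ (simp add: algebra_simps power2_eq_square)

definition a2_bracket :: "real \<Rightarrow> real \<Rightarrow> real" where
  "a2_bracket m e = e*(59*e^3 - 9*e^2 + 17*e - 3)*m^4
     + 4*e*(15*e^3 + 15*e^2 + 17*e + 1)*m^3
     + 4*(e+2)*(e^3 + 9*e^2 + 5*e + 1)*m^2
     - 8*(2*e^3 - 3*e^2 - 4*e - 3)*m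
     - 8*(e - 1)*(e + 2)"

lemma a2_eq_bracket: "a2 m e = (e^2 - e) * a2_bracket m e"
  unfolding a2_def a2_bracket_def by simp

lemma P7_base_values:
  "P7_re 6 0 3 = 0" "P7_im 6 0 3 = 0"
  "P7_re_dm 6 0 3 = 1401792" "P7_re_ds 6 0 3 = -150528" "P7_im_dm 6 0 3 = -78400"
  "a4 6 0 = 294784" "a2_bracket 6 0 = 448"
  by (simp_all add: P7_re_def P7_im_def P7_re_dm_def P7_im_dm_def P7_re_ds_def a2_bracket_def
      a0_def a1_def a2_def a3_def a4_def a5_def a6_def a7_def
      a1_dm_def a2_dm_def a3_dm_def a4_dm_def a5_dm_def a6_dm_def a7_dm_def)

lemma eventually_nhds_cube:
  fixes a b c :: real
  assumes "eventually P (nhds (a, b, c))"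
  obtains r where "0 < r"
    and "\<And>x y z. \<bar>x - a\<bar> \<le> r \<Longrightarrow> \<bar>y - b\<bar> \<le> r \<Longrightarrow> \<bar>z - c\<bar> \<le> r \<Longrightarrow> P (x, y, z)"
proof -
  obtain d where "0 < d" and d: "\<And>q. dist q (a, b, c) \<le> d \<Longrightarrow> P q"
    using assms unfolding eventually_nhds_metric_le by blast
  have "P (x, y, z)" if "\<bar>x - a\<bar> \<le> d/3" "\<bar>y - b\<bar> \<le> d/3" "\<bar>z - c\<bar> \<le> d/3" for x y z
  proof (rule d)
    have "dist (x, y, z) (a, b, c) = norm (x - a, y - b, z - c)"
      by (simp add: dist_norm)
    also have "\<dots> \<le> \<bar>x - a\<bar> + (\<bar>y - b\<bar> + \<bar>z - c\<bar>)"
      by (metis add_left_mono norm_Pair_le order_trans real_norm_def)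
    finally show "dist (x, y, z) (a, b, c) \<le> d"
      using that by linarith
  qed
  with \<open>0 < d\<close> show ?thesis
    using that[of "d/3"] by auto
qed

locale P7_box =
  fixes r :: real
  assumes r_pos: "0 < r" and r_le_1: "r \<le> 1"
    and local_signs: "\<lbrakk>\<bar>m - 6\<bar> \<le> r; \<bar>e\<bar> \<le> r; \<bar>s - 3\<bar> \<le> r\<rbrakk> \<Longrightarrow>
      0 < P7_re_dm m e s \<and> P7_re_ds m e s < 0 \<and> P7_im_dm m e s < 0
      \<and> 0 < a4 m e \<and> 0 < a2_bracket m e"

lemma ex_P7_box: "\<exists>r. P7_box r"
proof -
  define p :: "real \<times> real \<times> real" where "p = (6, 0, 3)"
  have above: "\<forall>\<^sub>F x in nhds p. c < f x" if "isCont f p" "c < f p" for f :: "_ \<Rightarrow> real" and c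
    using that order_tendstoD(1) tendsto_at_iff_tendsto_nhds isCont_def by metis
  have below: "\<forall>\<^sub>F x in nhds p. f x < c" if "isCont f p" "f p < c" for f :: "_ \<Rightarrow> real" and c
    using that order_tendstoD(2) tendsto_at_iff_tendsto_nhds isCont_def by metis
  have "\<forall>\<^sub>F x in nhds p. 0 < P7_re_dm (fst x) (fst (snd x)) (snd (snd x))
      \<and> P7_re_ds (fst x) (fst (snd x)) (snd (snd x)) < 0
      \<and> P7_im_dm (fst x) (fst (snd x)) (snd (snd x)) < 0
      \<and> 0 < a4 (fst x) (fst (snd x)) \<and> 0 < a2_bracket (fst x) (fst (snd x))"
    by (intro eventually_conj above below;
        (unfold P7_re_dm_def P7_re_ds_def P7_im_dm_def a2_bracket_def a1_def a3_def a4_def a5_def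
          a1_dm_def a2_dm_def a3_dm_def a4_dm_def a5_dm_def a6_dm_def a7_dm_def,
          intro continuous_intros | simp add: p_def P7_base_values))
  then obtain r where "0 < r" and r: "\<And>m e s. \<bar>m - 6\<bar> \<le> r \<Longrightarrow> \<bar>e\<bar> \<le> r \<Longrightarrow> \<bar>s - 3\<bar> \<le> r \<Longrightarrow>
      0 < P7_re_dm m e s \<and> P7_re_ds m e s < 0 \<and> P7_im_dm m e s < 0
      \<and> 0 < a4 m e \<and> 0 < a2_bracket m e"
    unfolding p_def by (rule eventually_nhds_cube) auto
  then have "P7_box (min r 1)"
    by unfold_locales auto
  then show ?thesis ..
qed

definition P7_brackets :: "real \<Rightarrow> real \<Rightarrow> bool" where
  "P7_brackets d e \<longleftrightarrow>
     0 < P7_im (6 - d) e 3 \<and> P7_re (6 - d) e 3 < 0 \<and> P7_im (6 + d) e 3 < 0 \<and> 0 < P7_re (6 + d) e 3"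

context P7_box
begin

lemma P7_re_strict_mono_m:
  assumes "\<bar>m - 6\<bar> \<le> r" "\<bar>m' - 6\<bar> \<le> r" "m < m'" "\<bar>e\<bar> \<le> r" "\<bar>s - 3\<bar> \<le> r"
  shows "P7_re m e s < P7_re m' e s"
  using assms local_signs
  by (intro DERIV_pos_imp_increasing[where f = "\<lambda>m. P7_re m e s"])
    (auto intro!: has_real_derivative_P7_re_m)

lemma P7_im_strict_antimono_m:
  assumes "\<bar>m - 6\<bar> \<le> r" "\<bar>m' - 6\<bar> \<le> r" "m < m'" "\<bar>e\<bar> \<le> r" "\<bar>s - 3\<bar> \<le> r"
  shows "P7_im m' e s < P7_im m e s"
  using assms local_signs
  by (intro DERIV_neg_imp_decreasing[where f = "\<lambda>m. P7_im m e s"])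
    (auto intro!: has_real_derivative_P7_im_m)

lemma P7_re_strict_antimono_s:
  assumes "\<bar>m - 6\<bar> \<le> r" "\<bar>e\<bar> \<le> r" "\<bar>s - 3\<bar> \<le> r" "\<bar>s' - 3\<bar> \<le> r" "s < s'"
  shows "P7_re m e s' < P7_re m e s"
  using assms local_signs
  by (intro DERIV_neg_imp_decreasing[where f = "P7_re m e"])
    (auto intro!: has_real_derivative_P7_re_s)

text \<open>For 0 \<le> e \<le> 1 we have a4 > 0, a2 \<le> 0 and a0 \<ge> 0, so P7_im is decreasing on all of
  s \<ge> 0, not only near s = 3.\<close>

lemma P7_im_strict_antimono_s:
  assumes "\<bar>m - 6\<bar> \<le> r" "0 \<le> e" "e \<le> r" "0 \<le> s" "s < s'"
  shows "P7_im m e s' < P7_im m e s"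
proof -
  have "0 < a4 m e" "0 < a2_bracket m e"
    using local_signs[of m e 3] assms r_pos by auto
  moreover have "e^2 - e \<le> 0"
    using assms r_le_1 mult_left_mono[of e 1 e] by (simp add: power2_eq_square)
  ultimately have "a2 m e \<le> 0"
    by (simp add: a2_eq_bracket mult_nonpos_nonneg)
  moreover have "0 \<le> a0 m e"
    by (simp add: a0_def)
  moreover have "s^2 \<le> s'^2" "s^3 \<le> s'^3"
    using assms by (simp_all add: power_mono)
  ultimately have "a4 m e * s < a4 m e * s'" "a2 m e * s'^2 \<le> a2 m e * s^2"
    "a0 m e * s^3 \<le> a0 m e * s'^3"
    using \<open>0 < a4 m e\<close> assms by (simp_all add: mult_left_mono mult_left_mono_neg)
  then show ?thesis
    unfolding P7_im_def by linarith
qed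

lemma monotone_crossing_P7:
  assumes "0 < \<delta>" "\<delta> \<le> r" "0 < e" "e \<le> r"
    and "0 < P7_im (6 + \<delta>) e (3 - r)" "P7_im (6 - \<delta>) e (3 + r) < 0"
  shows "monotone_crossing (\<lambda>m. P7_re m e) (\<lambda>m. P7_im m e) (6 - \<delta>) (6 + \<delta>) (3 - r) (3 + r)"
proof unfold_locales
  fix m assume m: "m \<in> {6 - \<delta>..6 + \<delta>}"
  then show "0 < P7_im m e (3 - r)"
    using P7_im_strict_antimono_m[of m "6 + \<delta>" e "3 - r"] assms
    by (cases "m = 6 + \<delta>") (auto simp: abs_le_iff)
  show "P7_im m e (3 + r) < 0"
    using m P7_im_strict_antimono_m[of "6 - \<delta>" m e "3 + r"] assms
    by (cases "m = 6 - \<delta>") (auto simp: abs_le_iff)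
next
  show "continuous_on ({6 - \<delta>..6 + \<delta>} \<times> {3 - r..3 + r}) (\<lambda>x. P7_im (fst x) e (snd x))"
    unfolding P7_im_def a0_def a2_def a4_def a6_def by (intro continuous_intros)
  show "continuous_on ({6 - \<delta>..6 + \<delta>} \<times> {3 - r..3 + r}) (\<lambda>x. P7_re (fst x) e (snd x))"
    unfolding P7_re_def a1_def a3_def a5_def a7_def by (intro continuous_intros)
qed (use assms r_le_1 in \<open>auto intro: P7_im_strict_antimono_s P7_im_strict_antimono_m
      P7_re_strict_mono_m P7_re_strict_antimono_s\<close>)

lemma eventually_P7_brackets:
  assumes "0 < d" "d \<le> r"
  shows "\<forall>\<^sub>F e in at_right 0. P7_brackets d e"
proof -
  have at_0: "P7_brackets d 0"
    using P7_im_strict_antimono_m[of "6 - d" 6 0 3] P7_im_strict_antimono_m[of 6 "6 + d" 0 3]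
      P7_re_strict_mono_m[of "6 - d" 6 0 3] P7_re_strict_mono_m[of 6 "6 + d" 0 3]
      P7_base_values assms r_pos
    by (auto simp: P7_brackets_def)
  have "((\<lambda>e. P7_im m e 3) \<longlongrightarrow> P7_im m 0 3) (at_right 0)"
    "((\<lambda>e. P7_re m e 3) \<longlongrightarrow> P7_re m 0 3) (at_right 0)" for m
    by (intro tendsto_P7_im tendsto_P7_re tendsto_const tendsto_ident_at)+
  with at_0 show ?thesis
    unfolding P7_brackets_def by (intro eventually_conj order_tendstoD) auto
qed

lemma ex_delta:
  "\<exists>\<delta>. 0 < \<delta> \<and> \<delta> < r \<and> 0 < P7_im (6 + \<delta>) 0 (3 - r) \<and> P7_im (6 - \<delta>) 0 (3 + r) < 0"
proof -
  have "0 < P7_im 6 0 (3 - r)" "P7_im 6 0 (3 + r) < 0"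
    using P7_im_strict_antimono_s[of 6 0 "3 - r" 3] P7_im_strict_antimono_s[of 6 0 3 "3 + r"]
      P7_base_values r_pos r_le_1 by auto
  moreover have "((\<lambda>d. P7_im (6 + d) 0 (3 - r)) \<longlongrightarrow> P7_im 6 0 (3 - r)) (at_right 0)"
    "((\<lambda>d. P7_im (6 - d) 0 (3 + r)) \<longlongrightarrow> P7_im 6 0 (3 + r)) (at_right 0)"
    by (intro tendsto_P7_im tendsto_const; auto intro!: tendsto_eq_intros)+
  ultimately have "\<forall>\<^sub>F d in at_right 0. 0 < P7_im (6 + d) 0 (3 - r)"
    "\<forall>\<^sub>F d in at_right 0. P7_im (6 - d) 0 (3 + r) < 0"
    by (auto elim: order_tendstoD)
  moreover have "\<forall>\<^sub>F d in at_right (0::real). 0 < d"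
    by (rule eventually_at_right_less)
  moreover have "\<forall>\<^sub>F d in at_right 0. d < r"
    using order_tendstoD(2)[OF tendsto_ident_at r_pos] .
  ultimately have "\<forall>\<^sub>F d in at_right 0.
      0 < d \<and> d < r \<and> 0 < P7_im (6 + d) 0 (3 - r) \<and> P7_im (6 - d) 0 (3 + r) < 0"
    by eventually_elim auto
  then show ?thesis
    using eventually_happens'[of "at_right (0::real)"] by auto
qed

end

section \<open>The critical value of m\<close>

locale P7_critical = P7_box +
  fixes \<delta> eps0 :: real
  assumes delta_pos: "0 < \<delta>" and delta_le: "\<delta> \<le> r"
    and eps0_pos: "0 < eps0" and eps0_le: "eps0 \<le> r"
    and window: "e \<in> {0<..<eps0} \<Longrightarrow>
      0 < P7_im (6 + \<delta>) e (3 - r) \<and> P7_im (6 - \<delta>) e (3 + r) < 0 \<and> P7_brackets \<delta> e"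

lemma (in P7_box) ex_P7_critical: "\<exists>\<delta> eps0. P7_critical r \<delta> eps0"
proof -
  obtain \<delta> where \<delta>: "0 < \<delta>" "\<delta> < r" "0 < P7_im (6 + \<delta>) 0 (3 - r)" "P7_im (6 - \<delta>) 0 (3 + r) < 0"
    using ex_delta by blast
  have "((\<lambda>e. P7_im (6 + \<delta>) e (3 - r)) \<longlongrightarrow> P7_im (6 + \<delta>) 0 (3 - r)) (at_right 0)"
    "((\<lambda>e. P7_im (6 - \<delta>) e (3 + r)) \<longlongrightarrow> P7_im (6 - \<delta>) 0 (3 + r)) (at_right 0)"
    by (intro tendsto_P7_im tendsto_const tendsto_ident_at)+
  then have "\<forall>\<^sub>F e in at_right 0. 0 < P7_im (6 + \<delta>) e (3 - r)"
    "\<forall>\<^sub>F e in at_right 0. P7_im (6 - \<delta>) e (3 + r) < 0"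
    using \<delta> by (auto elim: order_tendstoD)
  moreover have "\<forall>\<^sub>F e in at_right 0. P7_brackets \<delta> e"
    using \<delta> by (intro eventually_P7_brackets) auto
  ultimately have "\<forall>\<^sub>F e in at_right 0.
      0 < P7_im (6 + \<delta>) e (3 - r) \<and> P7_im (6 - \<delta>) e (3 + r) < 0 \<and> P7_brackets \<delta> e"
    by eventually_elim auto
  then obtain b where "0 < b" and b: "\<And>e. 0 < e \<Longrightarrow> e < b \<Longrightarrow>
      0 < P7_im (6 + \<delta>) e (3 - r) \<and> P7_im (6 - \<delta>) e (3 + r) < 0 \<and> P7_brackets \<delta> e"
    unfolding eventually_at_right_field by auto
  have "P7_critical r \<delta> (min b r)"
    using \<delta> \<open>0 < b\<close> b r_pos by unfold_locales auto
  then show ?thesis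
    by blast
qed

context P7_critical
begin

abbreviation sq_freq :: "real \<Rightarrow> real \<Rightarrow> real" where
  "sq_freq e \<equiv> monotone_crossing.zero_curve (\<lambda>m. P7_im m e)"

abbreviation re_on_curve :: "real \<Rightarrow> real \<Rightarrow> real" where
  "re_on_curve e \<equiv> monotone_crossing.R_on_curve (\<lambda>m. P7_re m e) (\<lambda>m. P7_im m e)"

lemma monotone_crossing_window: "e \<in> {0<..<eps0} \<Longrightarrow>
    monotone_crossing (\<lambda>m. P7_re m e) (\<lambda>m. P7_im m e) (6 - \<delta>) (6 + \<delta>) (3 - r) (3 + r)"
  using window delta_pos delta_le eps0_le by (intro monotone_crossing_P7) auto

lemma eventually_window: "\<forall>\<^sub>F e in at_right 0. e \<in> {0<..<eps0}"
  unfolding eventually_at_right_field using eps0_pos by auto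

lemma unique_imag_pair_iff_on_curve:
  assumes "e \<in> {0<..<eps0}" "m \<in> {6 - \<delta>..6 + \<delta>}"
  shows "unique_imag_pair (P7 m e) w \<longleftrightarrow> 0 < w \<and> w^2 = sq_freq e m \<and> re_on_curve e m = 0"
proof -
  interpret monotone_crossing "\<lambda>m. P7_re m e" "\<lambda>m. P7_im m e" "6 - \<delta>" "6 + \<delta>" "3 - r" "3 + r"
    using monotone_crossing_window[OF assms(1)] .
  have "s = s'" if "0 < s" "0 < s'" "P7_im m e s = 0" "P7_im m e s' = 0" for s s'
    using zero_curve_eq_iff[OF assms(2)] that by auto
  then have "unique_imag_pair (P7 m e) w \<longleftrightarrow> 0 < w \<and> P7_re m e (w^2) = 0 \<and> P7_im m e (w^2) = 0"
    by (rule unique_imag_pair_P7_iff)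
  then show ?thesis
    using common_zero_iff[OF assms(2), of "w^2"] by (cases "0 < w") auto
qed

lemma ex1_critical:
  assumes e: "e \<in> {0<..<eps0}"
  shows "\<exists>!m. m \<in> {6 - \<delta><..<6 + \<delta>} \<and> (\<exists>w. unique_imag_pair (P7 m e) w)"
proof -
  interpret monotone_crossing "\<lambda>m. P7_re m e" "\<lambda>m. P7_im m e" "6 - \<delta>" "6 + \<delta>" "3 - r" "3 + r"
    using monotone_crossing_window[OF e] .
  have critical_iff: "(\<exists>w. unique_imag_pair (P7 m e) w) \<longleftrightarrow> R_on_curve m = 0"
    if "m \<in> {6 - \<delta>..6 + \<delta>}" for m
  proof -
    have "0 < sqrt (zero_curve m) \<and> (sqrt (zero_curve m))^2 = zero_curve m"
      using zero_curve_pos[OF that] by simp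
    then show ?thesis
      using unique_imag_pair_iff_on_curve[OF e that] by blast
  qed
  have "R_on_curve (6 - \<delta>) < 0" "0 < R_on_curve (6 + \<delta>)"
    using window[OF e] delta_pos r_pos
    by (auto intro!: R_on_curve_neg[of _ 3] R_on_curve_pos[of _ 3] simp: P7_brackets_def)
  then obtain m where m: "m \<in> {6 - \<delta><..<6 + \<delta>}" "R_on_curve m = 0"
    using ex_R_on_curve_zero delta_pos by auto
  have inj: "inj_on R_on_curve {6 - \<delta>..6 + \<delta>}"
    using R_on_curve_strict_mono by (rule strict_mono_on_imp_inj_on)
  show ?thesis
  proof (rule ex1I[of _ m])
    show "m \<in> {6 - \<delta><..<6 + \<delta>} \<and> (\<exists>w. unique_imag_pair (P7 m e) w)"
      using m critical_iff by auto
  next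
    fix m' assume "m' \<in> {6 - \<delta><..<6 + \<delta>} \<and> (\<exists>w. unique_imag_pair (P7 m' e) w)"
    then have "m' \<in> {6 - \<delta>..6 + \<delta>}" "R_on_curve m' = 0"
      using critical_iff[of m'] by auto
    then show "m' = m"
      using inj_onD[OF inj] m by auto
  qed
qed

definition critical_m :: "real \<Rightarrow> real" where
  "critical_m e = (THE m. m \<in> {6 - \<delta><..<6 + \<delta>} \<and> (\<exists>w. unique_imag_pair (P7 m e) w))"

definition frequency :: "real \<Rightarrow> real" where
  "frequency e = (THE w. unique_imag_pair (P7 (critical_m e) e) w)"

lemma critical_m_in_window: "e \<in> {0<..<eps0} \<Longrightarrow> critical_m e \<in> {6 - \<delta><..<6 + \<delta>}"
  using theI'[OF ex1_critical] unfolding critical_m_def by blast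

lemma unique_imag_pair_frequency:
  assumes "e \<in> {0<..<eps0}"
  shows "unique_imag_pair (P7 (critical_m e) e) (frequency e)"
proof -
  have "\<exists>w. unique_imag_pair (P7 (critical_m e) e) w"
    using theI'[OF ex1_critical[OF assms]] unfolding critical_m_def by blast
  then have "\<exists>!w. unique_imag_pair (P7 (critical_m e) e) w"
    using unique_imag_pair_unique by blast
  then show ?thesis
    unfolding frequency_def by (rule theI')
qed

lemma critical_m_unique:
  assumes "e \<in> {0<..<eps0}" "m \<in> {6 - \<delta><..<6 + \<delta>}" "unique_imag_pair (P7 m e) w"
  shows "m = critical_m e"
  using the1_equality[OF ex1_critical[OF assms(1)]] assms(2,3) unfolding critical_m_def by blast

lemma
  assumes "e \<in> {0<..<eps0}"
  shows re_on_curve_critical_m: "re_on_curve e (critical_m e) = 0"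
    and frequency_sq: "(frequency e)^2 = sq_freq e (critical_m e)"
  using unique_imag_pair_iff_on_curve[OF assms, of "critical_m e"]
    critical_m_in_window[OF assms] unique_imag_pair_frequency[OF assms]
  by auto

lemma
  assumes "e \<in> {0<..<eps0}" "0 \<le> u"
  shows less_sq_freq_critical_iff: "u < sq_freq e (critical_m e) \<longleftrightarrow> 0 < P7_im (critical_m e) e u"
    and sq_freq_critical_less_iff: "sq_freq e (critical_m e) < u \<longleftrightarrow> P7_im (critical_m e) e u < 0"
proof -
  interpret monotone_crossing "\<lambda>m. P7_re m e" "\<lambda>m. P7_im m e" "6 - \<delta>" "6 + \<delta>" "3 - r" "3 + r"
    using monotone_crossing_window[OF assms(1)] .
  have "critical_m e \<in> {6 - \<delta>..6 + \<delta>}"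
    using critical_m_in_window[OF assms(1)] by auto
  then show "u < sq_freq e (critical_m e) \<longleftrightarrow> 0 < P7_im (critical_m e) e u"
    and "sq_freq e (critical_m e) < u \<longleftrightarrow> P7_im (critical_m e) e u < 0"
    using less_zero_curve_iff zero_curve_less_iff assms(2) by auto
qed

lemma tendsto_critical_m: "(critical_m \<longlongrightarrow> 6) (at_right 0)"
proof (rule tendstoI)
  fix \<eta> :: real assume "0 < \<eta>"
  define d where "d = min \<eta> \<delta>"
  have d: "0 < d" "d \<le> \<delta>" "d \<le> \<eta>"
    using \<open>0 < \<eta>\<close> delta_pos by (auto simp: d_def)
  have "\<forall>\<^sub>F e in at_right 0. P7_brackets d e"
    using d delta_le by (intro eventually_P7_brackets) auto
  with eventually_window show "\<forall>\<^sub>F e in at_right 0. dist (critical_m e) 6 < \<eta>"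
  proof eventually_elim
    case (elim e)
    interpret monotone_crossing "\<lambda>m. P7_re m e" "\<lambda>m. P7_im m e" "6 - \<delta>" "6 + \<delta>" "3 - r" "3 + r"
      using monotone_crossing_window[OF elim(1)] .
    have in_window: "6 - d \<in> {6 - \<delta>..6 + \<delta>}" "6 + d \<in> {6 - \<delta>..6 + \<delta>}"
      "critical_m e \<in> {6 - \<delta>..6 + \<delta>}"
      using d critical_m_in_window[OF elim(1)] by auto
    have "R_on_curve (6 - d) < R_on_curve (critical_m e)"
      "R_on_curve (critical_m e) < R_on_curve (6 + d)"
      using R_on_curve_neg[OF in_window(1), of 3] R_on_curve_pos[OF in_window(2), of 3]
        re_on_curve_critical_m[OF elim(1)] elim(2) r_pos
      by (auto simp: P7_brackets_def)
    then show ?case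
      using strict_mono_on_less[OF R_on_curve_strict_mono] in_window d
      by (auto simp: dist_real_def abs_less_iff)
  qed
qed

lemma tendsto_sq_freq_critical: "((\<lambda>e. sq_freq e (critical_m e)) \<longlongrightarrow> 3) (at_right 0)"
proof (rule order_tendstoI)
  have lim: "((\<lambda>e. P7_im (critical_m e) e u) \<longlongrightarrow> P7_im 6 0 u) (at_right 0)" for u
    by (intro tendsto_P7_im tendsto_critical_m tendsto_ident_at)
  fix t :: real
  {
    assume "t < 3"
    define u where "u = max t (3 - r)"
    have u: "0 \<le> u" "u < 3" "t \<le> u"
      using \<open>t < 3\<close> r_pos r_le_1 by (auto simp: u_def)
    then have "0 < P7_im 6 0 u"
      using P7_im_strict_antimono_s[of 6 0 u 3] r_pos P7_base_values by auto
    with lim have "\<forall>\<^sub>F e in at_right 0. 0 < P7_im (critical_m e) e u"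
      by (rule order_tendstoD)
    with eventually_window show "\<forall>\<^sub>F e in at_right 0. t < sq_freq e (critical_m e)"
      by eventually_elim (use less_sq_freq_critical_iff u in fastforce)
  next
    assume "3 < t"
    define u where "u = min t (3 + r)"
    have u: "0 \<le> u" "3 < u" "u \<le> t"
      using \<open>3 < t\<close> r_pos by (auto simp: u_def)
    then have "P7_im 6 0 u < 0"
      using P7_im_strict_antimono_s[of 6 0 3 u] r_pos P7_base_values by auto
    with lim have "\<forall>\<^sub>F e in at_right 0. P7_im (critical_m e) e u < 0"
      by (rule order_tendstoD)
    with eventually_window show "\<forall>\<^sub>F e in at_right 0. sq_freq e (critical_m e) < t"
      by eventually_elim (use sq_freq_critical_less_iff u in fastforce)
  }
qed

lemma tendsto_frequency: "(frequency \<longlongrightarrow> sqrt 3) (at_right 0)"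
proof -
  have "\<forall>\<^sub>F e in at_right 0. sqrt (sq_freq e (critical_m e)) = frequency e"
    using eventually_window
  proof eventually_elim
    case (elim e)
    have "0 < frequency e"
      using unique_imag_pair_frequency[OF elim] unfolding unique_imag_pair_def by blast
    then show ?case
      using frequency_sq[OF elim] by (intro real_sqrt_unique) auto
  qed
  then have "((\<lambda>e. sqrt (sq_freq e (critical_m e))) \<longlongrightarrow> sqrt 3) (at_right 0) \<longleftrightarrow>
      (frequency \<longlongrightarrow> sqrt 3) (at_right 0)"
    by (rule tendsto_cong)
  then show ?thesis
    using tendsto_real_sqrt[OF tendsto_sq_freq_critical] by (rule iffD1)
qed

end

theorem proposition5p1:
  shows "\<exists>eps0 > 0. \<exists>\<delta> > 0. \<exists>mc :: real \<Rightarrow> real. \<exists>\<omega> :: real \<Rightarrow> real.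
    (\<forall>e \<in> {0<..<eps0}. mc e \<in> {6 - \<delta><..<6 + \<delta>}) \<and>
    (mc \<longlongrightarrow> 6) (at_right 0) \<and>
    (\<forall>e \<in> {0<..<eps0}. unique_imag_pair (P7 (mc e) e) (\<omega> e)) \<and>
    (\<forall>mc' :: real \<Rightarrow> real.
       ((\<forall>e \<in> {0<..<eps0}. mc' e \<in> {6 - \<delta><..<6 + \<delta>}) \<and>
        (mc' \<longlongrightarrow> 6) (at_right 0) \<and>
        (\<forall>e \<in> {0<..<eps0}. \<exists>w. unique_imag_pair (P7 (mc' e) e) w))
       \<longrightarrow> (\<forall>e \<in> {0<..<eps0}. mc' e = mc e)) \<and>
    (\<omega> \<longlongrightarrow> sqrt 3) (at_right 0)"
proof -
  obtain r where "P7_box r"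
    using ex_P7_box ..
  then obtain \<delta> eps0 where "P7_critical r \<delta> eps0"
    using P7_box.ex_P7_critical by blast
  then interpret P7_critical r \<delta> eps0 .
  have "\<forall>mc'. (\<forall>e \<in> {0<..<eps0}. mc' e \<in> {6 - \<delta><..<6 + \<delta>})
      \<and> (\<forall>e \<in> {0<..<eps0}. \<exists>w. unique_imag_pair (P7 (mc' e) e) w)
      \<longrightarrow> (\<forall>e \<in> {0<..<eps0}. mc' e = critical_m e)"
    using critical_m_unique by blast
  then show ?thesis
    using eps0_pos delta_pos critical_m_in_window unique_imag_pair_frequency
      tendsto_critical_m tendsto_frequency
    by blast
qed

end
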